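(* Let $X \in \mathbb{R}^{n\times p}$ with columns $X_1,\dots,X_p \in \mathbb{R}^n$, let $y \in \mathbb{R}^n$, $\rho > 0$, and let $k$ be a positive integer. Consider the semidefinite program (SDP$_{DCL}$) \[ \min_{b \in \mathbb{R}^p,\ B \in \mathcal{S}^p,\ z \in \mathbb{R}^p} \ \frac{1}{2}\left\langle \begin{bmatrix} y^Ty & -y^TX \\ -X^Ty & \rho I_p + X^TX\end{bmatrix}, \begin{bmatrix} 1 & b^T \\ b & B\end{bmatrix}\right\rangle \] subject to $\begin{bmatrix} 1 & b^T \\ b & B\end{bmatrix} \succeq 0$, $\begin{bmatrix} z_i & b_i \\ b_i & B_{ii}\end{bmatrix} \succeq 0$ for all $i=1,\dots,p$, and $\sum_{i=1}^p z_i \le k$. Let $S \subseteq \{1,\dots,p\}$ with $|S| = k$, let $z^* \in \{0,1\}^p$ be given by $z^*_i = 1$ for $i \in S$ and $z^*_i = 0$ for $i \notin S$, and let \[ b^* \in \arg\min_{\beta \in \mathbb{R}^p}\left\{ \|X\beta - y\|_2^2 + \rho\|\beta\|_2^2 \ : \ \beta_j = 0 \ \forall j \notin S\right\}. \] Let $X_S$ be the $n\times |S|$ submatrix of $X$ consisting of the columns indexed by $S$, and $M := \left(I_n + \rho^{-1} X_S X_S^T\right)^{-1}$. Then $(b^*, b^* b^{*T}, z^* )$ is an optimal solution of (SDP$_{DCL}$) if and only if there exist a vector $\tilde d \in \mathbb{R}^p_+$ and a scalar $\tilde\lambda \in \mathbb{R}_+$ such that \[ \rho^{-1}X^TX + I_p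 - \mathbf{D}(\tilde d) \succeq 0, \] \[ \tilde\lambda = \tilde d_i \left(X_i^T M y\right)^2 \quad \forall i \in S, \] \[ \tilde\lambda \tilde d_i \ge \left(X_i^T M y\right)^2 \quad \forall i \notin S. \]
   Context: $\mathbf{D}(d)$ denotes the $p\times p$ diagonal matrix with diagonal entries $d_1,\dots,d_p$; $\mathcal{S}^p$ is the space of real symmetric $p\times p$ matrices; $\succeq 0$ denotes positive semidefiniteness; $\langle A, C\rangle = \mathrm{trace}(A^TC)$; $\mathbb{R}^p_+$ is the nonnegative orthant. *)

theory Defs
  imports "HOL-Analysis.Analysis"
begin

definition psd :: "real^'m^'m \<Rightarrow> bool" where
  "psd A \<longleftrightarrow> transpose A = A \<and> (\<forall>x. 0 \<le> x \<bullet> (A *v x))"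

definition symmetric_mat :: "real^'m^'m \<Rightarrow> bool" where
  "symmetric_mat A \<longleftrightarrow> transpose A = A"

definition diag_mat :: "real^'p \<Rightarrow> real^'p^'p" where
  "diag_mat d = (\<chi> i j. if i = j then d $ i else 0)"

definition tr_inner :: "real^'m^'m \<Rightarrow> real^'m^'m \<Rightarrow> real" where
  "tr_inner A C = trace (transpose A ** C)"

text \<open>The (p+1)x(p+1) block matrix [a, v^T; v, W]; the extra index is None.\<close>
definition block_mat :: "real \<Rightarrow> real^'p \<Rightarrow> real^'p^'p \<Rightarrow> real^('p option)^('p option)" where
  "block_mat a v W = (\<chi> i j. case i of
       None \<Rightarrow> (case j of None \<Rightarrow> a | Some j' \<Rightarrow> v $ j')
     | Some i' \<Rightarrow> (case j of None \<Rightarrow> v $ i' | Some j' \<Rightarrow> W $ i' $ j'))"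

definition mat22 :: "real \<Rightarrow> real \<Rightarrow> real \<Rightarrow> real \<Rightarrow> real^2^2" where
  "mat22 a b c d = vector [vector [a, b], vector [c, d]]"

definition sdp_cost :: "real^'p^'n \<Rightarrow> real^'n \<Rightarrow> real \<Rightarrow> real^('p option)^('p option)" where
  "sdp_cost X y \<rho> = block_mat (y \<bullet> y) (- (transpose X *v y)) (\<rho> *\<^sub>R mat 1 + transpose X ** X)"

definition sdp_obj :: "real^'p^'n \<Rightarrow> real^'n \<Rightarrow> real \<Rightarrow> real^'p \<Rightarrow> real^'p^'p \<Rightarrow> real" where
  "sdp_obj X y \<rho> b B = (1/2) * tr_inner (sdp_cost X y \<rho>) (block_mat 1 b B)"

definition sdp_feasible :: "nat \<Rightarrow> real^'p \<Rightarrow> real^'p^'p \<Rightarrow> real^'p \<Rightarrow> bool" where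
  "sdp_feasible k b B z \<longleftrightarrow>
     symmetric_mat B \<and> psd (block_mat 1 b B) \<and>
     (\<forall>i. psd (mat22 (z $ i) (b $ i) (b $ i) (B $ i $ i))) \<and>
     (\<Sum>i\<in>UNIV. z $ i) \<le> real k"

definition sdp_optimal :: "real^'p^'n \<Rightarrow> real^'n \<Rightarrow> real \<Rightarrow> nat \<Rightarrow> real^'p \<Rightarrow> real^'p^'p \<Rightarrow> real^'p \<Rightarrow> bool" where
  "sdp_optimal X y \<rho> k b B z \<longleftrightarrow> sdp_feasible k b B z \<and>
     (\<forall>b' B' z'. sdp_feasible k b' B' z' \<longrightarrow> sdp_obj X y \<rho> b B \<le> sdp_obj X y \<rho> b' B')"

definition outer :: "real^'p \<Rightarrow> real^'p \<Rightarrow> real^'p^'p" where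
  "outer u v = (\<chi> i j. u $ i * v $ j)"

definition ridge_obj :: "real^'p^'n \<Rightarrow> real^'n \<Rightarrow> real \<Rightarrow> real^'p \<Rightarrow> real" where
  "ridge_obj X y \<rho> \<beta> = (norm (X *v \<beta> - y))\<^sup>2 + \<rho> * (norm \<beta>)\<^sup>2"

definition is_restricted_ridge_min :: "real^'p^'n \<Rightarrow> real^'n \<Rightarrow> real \<Rightarrow> 'p set \<Rightarrow> real^'p \<Rightarrow> bool" where
  "is_restricted_ridge_min X y \<rho> S b \<longleftrightarrow> (\<forall>j. j \<notin> S \<longrightarrow> b $ j = 0) \<and>
     (\<forall>\<beta>. (\<forall>j. j \<notin> S \<longrightarrow> \<beta> $ j = 0) \<longrightarrow> ridge_obj X y \<rho> b \<le> ridge_obj X y \<rho> \<beta>)"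

text \<open>X_S X_S^T, where X_S is the column submatrix of X indexed by S.\<close>
definition XS_XSt :: "real^'p^'n \<Rightarrow> 'p set \<Rightarrow> real^'n^'n" where
  "XS_XSt X S = (\<chi> i l. \<Sum>j\<in>S. X $ i $ j * X $ l $ j)"

definition Mmat :: "real^'p^'n \<Rightarrow> real \<Rightarrow> 'p set \<Rightarrow> real^'n^'n" where
  "Mmat X \<rho> S = matrix_inv (mat 1 + inverse \<rho> *\<^sub>R XS_XSt X S)"

definition indicator_vec :: "'p set \<Rightarrow> real^'p" where
  "indicator_vec S = (\<chi> i. if i \<in> S then 1 else 0)"

end

theory Submission
  imports Defs
begin

text \<open>
  Let \<open>c\<^sub>i = X\<^sub>i\<^sup>T M y\<close>. Since \<open>(I + \<rho>\<^sup>-\<^sup>1 X\<^sub>S X\<^sub>S\<^sup>T) (y - X b\<^sup>*) = y\<close>, \<open>c\<^sub>i\<close> is the correlation of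
  \<open>X\<^sub>i\<close> with the ridge residual, and stationarity of \<open>b\<^sup>*\<close> on \<open>S\<close> gives \<open>c\<^sub>i = \<rho> b\<^sup>*\<^sub>i\<close> there. Twice
  the SDP objective at \<open>(b, B, z)\<close> is the ridge objective at \<open>b\<close> plus \<open>\<langle>\<rho> I + X\<^sup>T X, B - b b\<^sup>T\<rangle>\<close>.

  Sufficiency is weak duality: pair \<open>\<Psi> = B - b b\<^sup>T + (b - b\<^sup>*)(b - b\<^sup>*)\<^sup>T \<succeq> 0\<close> with
  \<open>\<rho>\<^sup>-\<^sup>1 X\<^sup>T X + I - D(d) \<succeq> 0\<close>, and each \<open>2 \<times> 2\<close> constraint with a psd \<open>2 \<times> 2\<close> matrix built from
  \<open>d\<^sub>i\<close>, \<open>\<lambda>\<close> and \<open>c\<^sub>i\<close>; the objective is then at least the ridge value plus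
  \<open>\<lambda>/\<rho> (k - \<Sum> z\<^sub>i) \<ge> 0\<close>.

  Necessity: if all \<open>c\<^sub>j\<close>, \<open>j \<notin> S\<close>, vanish, \<open>d = 0\<close> works. Otherwise every \<open>c\<^sub>i\<close>, \<open>i \<in> S\<close>, is nonzero,
  since trading such an \<open>i\<close> with \<open>c\<^sub>i = 0\<close> for a \<open>j\<close> with \<open>c\<^sub>j \<noteq> 0\<close> would improve the objective.
  Perturbing the candidate in the direction of an arbitrary \<open>\<Psi> \<succeq> 0\<close> then shows
  \<open>4 (\<Sum>\<^sub>S \<Psi>\<^sub>i\<^sub>i / c\<^sub>i\<^sup>2) (\<Sum>\<^sub>S\<^sup>c \<Psi>\<^sub>i\<^sub>i c\<^sub>i\<^sup>2) \<le> \<langle>\<rho>\<^sup>-\<^sup>1 X\<^sup>T X + I, \<Psi>\<rangle>\<^sup>2\<close>, which by AM-GM yields an admissible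
  \<open>d\<close> with \<open>\<langle>D(d), \<Psi>\<rangle> \<le> \<langle>\<rho>\<^sup>-\<^sup>1 X\<^sup>T X + I, \<Psi>\<rangle>\<close>. The admissible \<open>d\<close> form a closed convex set, so a
  separating hyperplane argument produces one admissible \<open>d\<close> that works for all \<open>\<Psi>\<close> at once.
\<close>

section \<open>Positive semidefinite matrices\<close>

lemma quadratic_form_eq_sum:
  "(x::real^'n) \<bullet> (P *v x) = (\<Sum>i\<in>UNIV. \<Sum>j\<in>UNIV. x$i * P$i$j * x$j)"
  by (simp add: inner_vec_def matrix_vector_mult_def sum_distrib_left mult.assoc)

lemma inner_matrix_eq_sum: "(A::real^'n^'m) \<bullet> B = (\<Sum>i\<in>UNIV. \<Sum>j\<in>UNIV. A$i$j * B$i$j)"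
  by (simp add: inner_vec_def)

lemma quadratic_form_axis: "axis i 1 \<bullet> ((P::real^'n^'n) *v axis i 1) = P$i$i"
  by (simp add: matrix_vector_mult_basis inner_axis' column_def)

lemma transpose_add: "transpose (A + B) = transpose A + transpose (B::'a::semiring_1^'n^'m)"
  by (simp add: transpose_def vec_eq_iff)

lemma transpose_diff: "transpose (A - B) = transpose A - transpose (B::'a::ring_1^'n^'m)"
  by (simp add: transpose_def vec_eq_iff)

lemma symmetric_entry: "transpose P = P \<Longrightarrow> P$i$j = P$j$i"
  by (metis transpose_def vec_lambda_beta)

lemma psd_symmetric: "psd P \<Longrightarrow> transpose P = P"
  unfolding psd_def by blast

lemma psd_entry_sym: "psd P \<Longrightarrow> P$i$j = P$j$i"
  by (rule symmetric_entry[OF psd_symmetric])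

lemma psd_diag_nonneg: "psd P \<Longrightarrow> 0 \<le> P$i$i"
  unfolding psd_def by (metis quadratic_form_axis)

lemma psd_add: "psd A \<Longrightarrow> psd B \<Longrightarrow> psd (A + B)"
  unfolding psd_def by (simp add: matrix_vector_mult_add_rdistrib inner_add_right transpose_def vec_eq_iff)

lemma psd_scaleR: "0 \<le> s \<Longrightarrow> psd P \<Longrightarrow> psd (s *\<^sub>R P)"
  unfolding psd_def by (simp add: scaleR_matrix_vector_assoc[symmetric] transpose_def vec_eq_iff)

lemma psd_mat_1: "psd (mat 1 :: real^'n^'n)"
  by (simp add: psd_def)

lemma psd_zero: "psd (0::real^'n^'n)"
  by (simp add: psd_def transpose_def vec_eq_iff)

lemma psd_transpose_mult_self: "psd (transpose X ** (X::real^'n^'m))"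
  unfolding psd_def
proof (intro conjI allI)
  show "transpose (transpose X ** X) = transpose X ** X"
    by (simp add: matrix_transpose_mul)
  fix x :: "real^'n"
  have "x \<bullet> ((transpose X ** X) *v x) = (X *v x) \<bullet> (X *v x)"
    by (metis dot_lmul_matrix inner_commute matrix_vector_mul_assoc transpose_matrix_vector)
  then show "0 \<le> x \<bullet> ((transpose X ** X) *v x)" by simp
qed

lemma quadratic_form_add_axis:
  fixes W :: "real^'n^'n"
  assumes "transpose W = W"
  shows "(x + t *\<^sub>R axis a 1) \<bullet> (W *v (x + t *\<^sub>R axis a 1)) =
     x \<bullet> (W *v x) + 2 * t * (\<Sum>j\<in>UNIV. W$a$j * x$j) + t\<^sup>2 * W$a$a"
proof -
  have W_sym: "W$i$j = W$j$i" for i j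
    using assms by (rule symmetric_entry)
  have "(x + t *\<^sub>R axis a 1) \<bullet> (W *v (x + t *\<^sub>R axis a 1)) = x \<bullet> (W *v x)
      + t * (x \<bullet> (W *v axis a 1)) + t * (axis a 1 \<bullet> (W *v x)) + t\<^sup>2 * (axis a 1 \<bullet> (W *v axis a 1))"
    by (simp add: matrix_vector_right_distrib inner_add_left inner_add_right
        matrix_vector_mult_scaleR power2_eq_square algebra_simps)
  also have "x \<bullet> (W *v axis a 1) = (\<Sum>j\<in>UNIV. W$a$j * x$j)"
    by (simp add: matrix_vector_mult_basis inner_vec_def column_def W_sym mult.commute)
  also have "axis a 1 \<bullet> (W *v x) = (\<Sum>j\<in>UNIV. W$a$j * x$j)"
    by (simp add: inner_axis' matrix_vector_mult_def)
  also have "axis a 1 \<bullet> (W *v axis a 1) = W$a$a"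
    by (rule quadratic_form_axis)
  finally show ?thesis
    by simp
qed

lemma psd_row_eq_0:
  fixes W :: "real^'n^'n"
  assumes "psd W" "W$a$a = 0"
  shows "W$a$j = 0"
proof (rule ccontr)
  assume ne: "W$a$j \<noteq> 0"
  define t where "t = - (1 + \<bar>W$j$j\<bar>) / (2 * W$a$j)"
  have row: "(\<Sum>k\<in>UNIV. W$a$k * axis j 1 $ k) = W$a$j"
    using inner_axis[of "W$a" j 1] by (simp add: inner_vec_def)
  have "0 \<le> (axis j 1 + t *\<^sub>R axis a 1) \<bullet> (W *v (axis j 1 + t *\<^sub>R axis a 1))"
    using assms(1) unfolding psd_def by blast
  also have "\<dots> = W$j$j + 2 * t * W$a$j"
    unfolding quadratic_form_add_axis[OF psd_symmetric[OF assms(1)]] row quadratic_form_axis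
    using assms(2) by simp
  also have "2 * t * W$a$j = - (1 + \<bar>W$j$j\<bar>)"
    using ne by (simp add: t_def)
  finally show False by linarith
qed

lemma psd_row_Cauchy_Schwarz:
  fixes W :: "real^'n^'n"
  assumes "psd W"
  shows "(\<Sum>j\<in>UNIV. W$a$j * x$j)\<^sup>2 \<le> W$a$a * (x \<bullet> (W *v x))"
proof (cases "W$a$a = 0")
  case True
  then show ?thesis
    using psd_row_eq_0[OF assms True] by simp
next
  case False
  have pos: "W$a$a > 0"
    using False psd_diag_nonneg[OF assms, of a] by simp
  define s where "s = (\<Sum>j\<in>UNIV. W$a$j * x$j)"
  define t where "t = - s / W$a$a"
  have "0 \<le> (x + t *\<^sub>R axis a 1) \<bullet> (W *v (x + t *\<^sub>R axis a 1))"
    using assms unfolding psd_def by blast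
  also have "\<dots> = x \<bullet> (W *v x) + 2 * t * s + t\<^sup>2 * W$a$a"
    unfolding quadratic_form_add_axis[OF psd_symmetric[OF assms]] s_def ..
  also have "\<dots> = x \<bullet> (W *v x) - s\<^sup>2 / W$a$a"
    using pos by (simp add: t_def power2_eq_square field_simps)
  finally show ?thesis
    using pos by (simp add: s_def field_simps)
qed

lemma psd_entry_sq_le:
  assumes "psd W"
  shows "(W$i$j)\<^sup>2 \<le> W$i$i * W$j$j"
proof -
  have "(\<Sum>k\<in>UNIV. W$i$k * axis j 1 $ k) = W$i$j"
    using inner_axis[of "W$i" j 1] by (simp add: inner_vec_def)
  then show ?thesis
    using psd_row_Cauchy_Schwarz[OF assms, of i "axis j 1"] by (simp add: quadratic_form_axis)
qed

lemma inner_outer: "(M::real^'n^'n) \<bullet> outer w w = w \<bullet> (M *v w)"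
  by (simp add: inner_matrix_eq_sum quadratic_form_eq_sum outer_def mult_ac)

lemma quadratic_form_outer: "x \<bullet> (outer w w *v x) = (w \<bullet> x)\<^sup>2"
proof -
  have "x \<bullet> (outer w w *v x) = (\<Sum>i\<in>UNIV. x$i * w$i) * (\<Sum>j\<in>UNIV. w$j * x$j)"
    by (simp add: quadratic_form_eq_sum outer_def sum_product mult_ac)
  then show ?thesis
    by (simp add: inner_vec_def power2_eq_square mult.commute)
qed

lemma transpose_outer: "transpose (outer w w) = outer w w"
  by (simp add: transpose_def outer_def vec_eq_iff mult.commute)

lemma psd_outer: "psd (outer w w)"
  unfolding psd_def by (simp add: transpose_outer quadratic_form_outer)

lemma psd_minus_outer_row:
  fixes W :: "real^'n^'n"
  assumes W: "psd W" and pos: "W$a$a > 0"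
  shows "psd (W - (1 / W$a$a) *\<^sub>R outer (W$a) (W$a))"
  unfolding psd_def
proof (intro conjI allI)
  show "transpose (W - (1 / W$a$a) *\<^sub>R outer (W$a) (W$a)) = W - (1 / W$a$a) *\<^sub>R outer (W$a) (W$a)"
    by (simp add: transpose_def vec_eq_iff outer_def psd_entry_sym[OF W] mult.commute)
  fix x :: "real^'n"
  have "x \<bullet> ((W - (1 / W$a$a) *\<^sub>R outer (W$a) (W$a)) *v x) = x \<bullet> (W *v x) - (W$a \<bullet> x)\<^sup>2 / W$a$a"
    by (simp add: matrix_vector_mult_diff_rdistrib inner_diff_right quadratic_form_outer
        scaleR_matrix_vector_assoc[symmetric])
  moreover have "(W$a \<bullet> x)\<^sup>2 \<le> W$a$a * (x \<bullet> (W *v x))"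
    using psd_row_Cauchy_Schwarz[OF W, of a x] by (simp add: inner_vec_def)
  ultimately have "0 \<le> W$a$a * (x \<bullet> ((W - (1 / W$a$a) *\<^sub>R outer (W$a) (W$a)) *v x))"
    using pos by (simp add: field_simps)
  then show "0 \<le> x \<bullet> ((W - (1 / W$a$a) *\<^sub>R outer (W$a) (W$a)) *v x)"
    using pos by (simp add: zero_le_mult_iff)
qed

text \<open>Fej\'er's theorem, peeling off one rank-one term per row of \<open>W\<close>.\<close>

lemma psd_inner_nonneg_supported:
  fixes M W :: "real^'n^'n"
  assumes M: "psd M" and F: "finite F"
    and W: "psd W" and supp: "\<And>i j. i \<notin> F \<Longrightarrow> W$i$j = 0"
  shows "0 \<le> M \<bullet> W"
  using F W supp
proof (induction F arbitrary: W rule: finite_induct)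
  case empty
  then show ?case by (simp add: inner_matrix_eq_sum)
next
  case (insert a F)
  show ?case
  proof (cases "W$a$a = 0")
    case True
    have "\<And>i j. i \<notin> F \<Longrightarrow> W$i$j = 0"
      using insert.prems psd_row_eq_0[OF insert.prems(1) True] by (metis insertE)
    then show ?thesis using insert.IH insert.prems(1) by blast
  next
    case False
    have pos: "W$a$a > 0" using False psd_diag_nonneg[OF insert.prems(1), of a] by simp
    define W' where "W' = W - (1 / W$a$a) *\<^sub>R outer (W$a) (W$a)"
    have "W'$i$j = 0" if "i \<notin> F" for i j
    proof (cases "i = a")
      case False
      with that have "W$i$j = 0" "W$a$i = 0"
        using insert.prems(2) psd_entry_sym[OF insert.prems(1), of a i] by auto
      then show ?thesis by (simp add: W'_def outer_def)
    qed (use pos in \<open>simp add: W'_def outer_def\<close>)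
    then have "0 \<le> M \<bullet> W'"
      using insert.IH psd_minus_outer_row[OF insert.prems(1) pos] unfolding W'_def by blast
    moreover have "M \<bullet> W = M \<bullet> W' + (1 / W$a$a) * (W$a \<bullet> (M *v W$a))"
      by (simp add: W'_def inner_diff_right inner_outer)
    moreover have "0 \<le> W$a \<bullet> (M *v W$a)" using M unfolding psd_def by blast
    ultimately show ?thesis using pos by simp
  qed
qed

lemma psd_inner_nonneg: "psd (M::real^'n^'n) \<Longrightarrow> psd W \<Longrightarrow> 0 \<le> M \<bullet> W"
  using psd_inner_nonneg_supported[of M UNIV W] by simp

lemma closed_psd: "closed {P::real^'n^'n. psd P}"
proof -
  have entry: "continuous_on UNIV (\<lambda>P::real^'n^'n. P$i$j)" for i j
    by (intro linear_continuous_on bounded_linear_compose[OF bounded_linear_vec_nth bounded_linear_vec_nth])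
  have "{P::real^'n^'n. psd P} = {P. \<forall>i j. P$i$j = P$j$i} \<inter>
      {P. \<forall>x. 0 \<le> (\<Sum>i\<in>UNIV. \<Sum>j\<in>UNIV. x$i * P$i$j * x$j)}"
    unfolding psd_def quadratic_form_eq_sum by (auto simp: transpose_def vec_eq_iff)
  also have "closed \<dots>"
    by (intro closed_Int closed_Collect_all closed_Collect_eq closed_Collect_le
        continuous_on_sum continuous_on_mult continuous_on_const entry)
  finally show ?thesis .
qed

lemma tr_inner_eq_inner: "tr_inner (A::real^'n^'n) C = A \<bullet> C"
proof -
  have "tr_inner A C = (\<Sum>i\<in>UNIV. \<Sum>k\<in>UNIV. A$k$i * C$k$i)"
    by (simp add: tr_inner_def trace_def matrix_matrix_mult_def transpose_def)
  also have "\<dots> = (\<Sum>k\<in>UNIV. \<Sum>i\<in>UNIV. A$k$i * C$k$i)"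
    by (rule sum.swap)
  finally show ?thesis
    by (simp add: inner_matrix_eq_sum)
qed

lemma inner_transpose_left: "(transpose P :: real^'n^'n) \<bullet> M = P \<bullet> transpose M"
proof -
  have "(transpose P :: real^'n^'n) \<bullet> M = (\<Sum>i\<in>UNIV. \<Sum>j\<in>UNIV. P$j$i * M$i$j)"
    by (simp add: inner_matrix_eq_sum transpose_def)
  also have "\<dots> = (\<Sum>j\<in>UNIV. \<Sum>i\<in>UNIV. P$j$i * M$i$j)"
    by (rule sum.swap)
  finally show ?thesis
    by (simp add: inner_matrix_eq_sum transpose_def)
qed

lemma inner_symmetric_part:
  "transpose M = M \<Longrightarrow> ((1/2) *\<^sub>R (P + transpose P)) \<bullet> (M::real^'n^'n) = P \<bullet> M"
  by (simp add: inner_add_left inner_transpose_left)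

lemma psd_symmetric_part:
  assumes "\<And>v. 0 \<le> P \<bullet> outer v v"
  shows "psd ((1/2) *\<^sub>R (P + transpose P))"
  unfolding psd_def
proof (intro conjI allI)
  show "transpose ((1/2) *\<^sub>R (P + transpose P)) = (1/2) *\<^sub>R (P + transpose P)"
    by (simp add: transpose_def vec_eq_iff)
  fix v
  have "v \<bullet> ((1/2) *\<^sub>R (P + transpose P) *v v) = (1/2) *\<^sub>R (P + transpose P) \<bullet> outer v v"
    by (rule inner_outer[symmetric])
  also have "\<dots> = P \<bullet> outer v v"
    by (rule inner_symmetric_part[OF transpose_outer])
  finally show "0 \<le> v \<bullet> ((1/2) *\<^sub>R (P + transpose P) *v v)"
    using assms[of v] by simp
qed

lemma inner_mat_1: "mat 1 \<bullet> (P::real^'n^'n) = (\<Sum>i\<in>UNIV. P$i$i)"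
proof -
  have "(\<Sum>j\<in>UNIV. mat 1 $ i $ j * P$i$j) = P$i$i" for i
    by (simp add: mat_def if_distrib[of "\<lambda>x. x * _"] cong: if_cong)
  then show ?thesis
    by (simp add: inner_matrix_eq_sum)
qed

lemma inner_diag_mat: "diag_mat d \<bullet> (P::real^'p^'p) = (\<Sum>i\<in>UNIV. d$i * P$i$i)"
proof -
  have "(\<Sum>j\<in>UNIV. diag_mat d $ i $ j * P$i$j) = d$i * P$i$i" for i
    by (simp add: diag_mat_def if_distrib[of "\<lambda>x. x * _"] cong: if_cong)
  then show ?thesis
    by (simp add: inner_matrix_eq_sum)
qed

lemma transpose_diag_mat: "transpose (diag_mat d) = diag_mat d"
  by (simp add: diag_mat_def transpose_def vec_eq_iff)

lemma diag_mat_add: "diag_mat (x + y) = diag_mat x + diag_mat y"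
  by (simp add: diag_mat_def vec_eq_iff)

lemma diag_mat_scaleR: "diag_mat (c *\<^sub>R x) = c *\<^sub>R diag_mat x"
  by (simp add: diag_mat_def vec_eq_iff)

lemma diag_mat_0: "diag_mat 0 = 0"
  by (simp add: diag_mat_def vec_eq_iff)

lemma bounded_linear_diag_mat: "bounded_linear diag_mat"
  by (simp add: linear_conv_bounded_linear[symmetric] linearI diag_mat_add diag_mat_scaleR)

lemma psd_minus_diag_mat_le: "psd (M - diag_mat d) \<Longrightarrow> d$i \<le> M$i$i"
  using psd_diag_nonneg[of "M - diag_mat d" i] by (simp add: diag_mat_def)

section \<open>The constraint matrices\<close>

lemma mat22_nth:
  "mat22 a b c d $ 1 $ 1 = a" "mat22 a b c d $ 1 $ 2 = b"
  "mat22 a b c d $ 2 $ 1 = c" "mat22 a b c d $ 2 $ 2 = d"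
  by (simp_all add: mat22_def)

lemma mat22_eq_iff: "M = mat22 a b c d \<longleftrightarrow> M$1$1 = a \<and> M$1$2 = b \<and> M$2$1 = c \<and> M$2$2 = d"
  by (auto simp: vec_eq_iff forall_2 mat22_nth)

lemma quadratic_form_mat22:
  "(x::real^2) \<bullet> (mat22 a b c d *v x) = a * (x$1)\<^sup>2 + (b + c) * x$1 * x$2 + d * (x$2)\<^sup>2"
  by (simp add: quadratic_form_eq_sum sum_2 mat22_nth power2_eq_square algebra_simps)

lemma inner_mat22: "mat22 a b c d \<bullet> mat22 a' b' c' d' = a * a' + b * b' + c * c' + d * d'"
  by (simp add: inner_matrix_eq_sum sum_2 mat22_nth)

lemma psd_mat22I:
  assumes "0 \<le> z" "0 \<le> B" "b\<^sup>2 \<le> z * B"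
  shows "psd (mat22 z b b B)"
  unfolding psd_def
proof (intro conjI allI)
  show "transpose (mat22 z b b B) = mat22 z b b B"
    by (simp add: vec_eq_iff transpose_def forall_2 mat22_nth)
  fix x :: "real^2"
  have "z * (z * (x$1)\<^sup>2 + 2 * b * x$1 * x$2 + B * (x$2)\<^sup>2) = (z * x$1 + b * x$2)\<^sup>2 + (z * B - b\<^sup>2) * (x$2)\<^sup>2"
    by (simp add: power2_eq_square algebra_simps)
  then have "0 \<le> z * (z * (x$1)\<^sup>2 + 2 * b * x$1 * x$2 + B * (x$2)\<^sup>2)"
    using assms by simp
  moreover have "b = 0" if "z = 0"
    using assms that by simp
  ultimately have "0 \<le> z * (x$1)\<^sup>2 + 2 * b * x$1 * x$2 + B * (x$2)\<^sup>2"
    using assms by (cases "z = 0") (auto simp: zero_le_mult_iff)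
  then show "0 \<le> x \<bullet> (mat22 z b b B *v x)"
    unfolding quadratic_form_mat22 by (simp add: algebra_simps)
qed

lemma psd_mat22_iff: "psd (mat22 z b b B) \<longleftrightarrow> 0 \<le> z \<and> 0 \<le> B \<and> b\<^sup>2 \<le> z * B"
  using psd_mat22I psd_diag_nonneg[of "mat22 z b b B" 1] psd_diag_nonneg[of "mat22 z b b B" 2]
    psd_entry_sq_le[of "mat22 z b b B" 1 2]
  by (auto simp: mat22_nth)

lemma psd_mat22_inner_nonneg:
  assumes "psd (mat22 z b b B)" "0 \<le> u" "0 \<le> w" "v\<^sup>2 \<le> u * w"
  shows "0 \<le> z * u + 2 * b * v + B * w"
  using psd_inner_nonneg[OF assms(1), of "mat22 u v v w"] assms(2-)
  by (simp add: psd_mat22_iff inner_mat22)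

text \<open>The region \<open>C \<le> l d\<close> of the nonnegative quadrant is convex: it is a slice of the \<open>2 \<times> 2\<close> psd cone.\<close>

lemma le_mult_convex_combination:
  fixes u v l1 l2 d1 d2 C :: real
  assumes "0 \<le> u" "0 \<le> v" "u + v = 1" "0 \<le> C"
    and "0 \<le> l1" "0 \<le> d1" "C \<le> l1 * d1" and "0 \<le> l2" "0 \<le> d2" "C \<le> l2 * d2"
  shows "C \<le> (u * l1 + v * l2) * (u * d1 + v * d2)"
proof -
  let ?r = "sqrt C"
  have "psd (mat22 l1 ?r ?r d1)" "psd (mat22 l2 ?r ?r d2)"
    using assms by (simp_all add: psd_mat22_iff)
  then have "psd (u *\<^sub>R mat22 l1 ?r ?r d1 + v *\<^sub>R mat22 l2 ?r ?r d2)"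
    using assms by (intro psd_add psd_scaleR)
  moreover have "u *\<^sub>R mat22 l1 ?r ?r d1 + v *\<^sub>R mat22 l2 ?r ?r d2 =
      mat22 (u * l1 + v * l2) ?r ?r (u * d1 + v * d2)"
    unfolding mat22_eq_iff using assms(3) by (simp add: mat22_nth algebra_simps flip: distrib_right)
  ultimately show ?thesis
    using assms(4) by (simp add: psd_mat22_iff)
qed

lemma sum_UNIV_option: "(\<Sum>i\<in>(UNIV::'a::finite option set). f i) = f None + (\<Sum>i\<in>UNIV. f (Some i))"
  by (simp add: UNIV_option_conv sum.reindex)

lemma inner_vec_option:
  "(u::real^('a::finite option)) \<bullet> v = u$None * v$None + (\<Sum>i\<in>UNIV. u$Some i * v$Some i)"
  by (simp add: inner_vec_def sum_UNIV_option)

lemma sum_UNIV_eq_sum_Compl: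
  "(\<Sum>i\<in>UNIV. f i) = (\<Sum>i\<in>S. f i) + (\<Sum>i\<in>-S. f i :: 'b::comm_monoid_add)" for S :: "'a::finite set"
proof -
  have "(\<Sum>i\<in>S \<union> -S. f i) = (\<Sum>i\<in>S. f i) + (\<Sum>i\<in>-S. f i)"
    by (rule sum.union_disjoint) auto
  then show ?thesis
    by simp
qed

lemma quadratic_form_block_mat:
  "x \<bullet> (block_mat a b B *v x) =
     a * (x$None)\<^sup>2 + 2 * x$None * (b \<bullet> (\<chi> i. x$Some i)) + (\<chi> i. x$Some i) \<bullet> (B *v (\<chi> i. x$Some i))"
proof -
  define v where "v = (\<chi> i. x$Some i)"
  have "(block_mat a b B *v x)$None = a * x$None + b \<bullet> v"
    by (simp add: matrix_vector_mult_def sum_UNIV_option block_mat_def v_def inner_vec_def)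
  moreover have "(block_mat a b B *v x)$Some i = b$i * x$None + (B *v v)$i" for i
    by (simp add: matrix_vector_mult_def sum_UNIV_option block_mat_def v_def)
  ultimately have "x \<bullet> (block_mat a b B *v x) =
      x$None * (a * x$None + b \<bullet> v) + (\<Sum>i\<in>UNIV. v$i * (b$i * x$None + (B *v v)$i))"
    by (simp add: inner_vec_option v_def)
  also have "\<dots> = a * (x$None)\<^sup>2 + 2 * x$None * (b \<bullet> v) + v \<bullet> (B *v v)"
    by (simp add: sum.distrib inner_vec_def sum_distrib_left sum_distrib_right power2_eq_square algebra_simps)
  finally show ?thesis
    by (simp add: v_def)
qed

lemma transpose_block_mat: "transpose (block_mat a b B) = block_mat a b (transpose B)"
  by (simp add: vec_eq_iff transpose_def block_mat_def split: option.splits)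

lemma psd_block_mat_imp_psd_Schur:
  assumes "psd (block_mat 1 b B)"
  shows "psd (B - outer b b)"
  unfolding psd_def
proof (intro conjI allI)
  have "block_mat 1 b (transpose B) $ Some i $ Some j = block_mat 1 b B $ Some i $ Some j" for i j
    using psd_symmetric[OF assms] by (simp only: transpose_block_mat)
  then have "transpose B = B"
    by (simp add: block_mat_def vec_eq_iff)
  then show "transpose (B - outer b b) = B - outer b b"
    by (simp add: transpose_outer transpose_diff)
  fix v :: "real^'a"
  define x :: "real^('a option)" where "x = (\<chi> i. case i of None \<Rightarrow> - (b \<bullet> v) | Some j \<Rightarrow> v$j)"
  have xv: "(\<chi> i. x$Some i) = v" by (simp add: x_def vec_eq_iff)
  have "0 \<le> x \<bullet> (block_mat 1 b B *v x)"
    using assms unfolding psd_def by blast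
  also have "\<dots> = v \<bullet> ((B - outer b b) *v v)"
    unfolding quadratic_form_block_mat xv
    by (simp add: x_def power2_eq_square matrix_vector_mult_diff_rdistrib inner_diff_right quadratic_form_outer)
  finally show "0 \<le> v \<bullet> ((B - outer b b) *v v)" .
qed

lemma psd_block_mat_outer_add:
  assumes "psd W"
  shows "psd (block_mat 1 b (outer b b + W))"
  unfolding psd_def
proof (intro conjI allI)
  show "transpose (block_mat 1 b (outer b b + W)) = block_mat 1 b (outer b b + W)"
    using psd_symmetric[OF assms] by (simp add: transpose_block_mat transpose_outer transpose_add)
  fix x :: "real^('a option)"
  define v where "v = (\<chi> i. x$Some i)"
  have "x \<bullet> (block_mat 1 b (outer b b + W) *v x) = (x$None + b \<bullet> v)\<^sup>2 + v \<bullet> (W *v v)"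
    unfolding quadratic_form_block_mat v_def[symmetric]
    by (simp add: matrix_vector_mult_add_rdistrib inner_add_right quadratic_form_outer power2_eq_square algebra_simps)
  also have "\<dots> \<ge> 0"
    using assms unfolding psd_def by simp
  finally show "0 \<le> x \<bullet> (block_mat 1 b (outer b b + W) *v x)" .
qed

lemma sum_indicator_vec: "(\<Sum>i\<in>UNIV. indicator_vec S $ i) = real (card S)"
  by (simp add: indicator_vec_def sum.If_cases)

text \<open>If \<open>B\<^sub>i\<^sub>i = 0\<close> then \<open>b\<^sub>i = 0\<close>, and \<open>z\<^sub>i = 0 / 0 = 0\<close>.\<close>

lemma sdp_feasible_ratio:
  assumes "psd \<Psi>" "0 \<le> s" and B: "B = outer b b + s *\<^sub>R \<Psi>"
    and sum_le: "(\<Sum>i\<in>UNIV. (b$i)\<^sup>2 / B$i$i) \<le> real k"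
  shows "sdp_feasible k b B (\<chi> i. (b$i)\<^sup>2 / B$i$i)"
  unfolding sdp_feasible_def
proof (intro conjI allI)
  show "symmetric_mat B"
    using psd_symmetric[OF assms(1)]
    by (simp add: symmetric_mat_def B transpose_add transpose_outer transpose_scalar)
  show "psd (block_mat 1 b B)"
    unfolding B using assms(1,2) by (intro psd_block_mat_outer_add psd_scaleR)
  fix i
  have Bii: "B$i$i = (b$i)\<^sup>2 + s * \<Psi>$i$i"
    by (simp add: B outer_def power2_eq_square)
  moreover have "0 \<le> s * \<Psi>$i$i"
    using assms(2) psd_diag_nonneg[OF assms(1)] by simp
  ultimately have "b$i = 0" if "B$i$i = 0"
    using that by (simp add: add_nonneg_eq_0_iff)
  with Bii \<open>0 \<le> s * \<Psi>$i$i\<close> show "psd (mat22 ((\<chi> i. (b$i)\<^sup>2 / B$i$i) $ i) (b$i) (b$i) (B$i$i))"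
    by (auto simp: psd_mat22_iff)
qed (use sum_le in simp)

section \<open>The SDP objective and the restricted ridge estimator\<close>

definition ridge_gram :: "real^'p^'n \<Rightarrow> real \<Rightarrow> real^'p^'p" where
  "ridge_gram X \<rho> = \<rho> *\<^sub>R mat 1 + transpose X ** X"

definition scaled_gram :: "real^'p^'n \<Rightarrow> real \<Rightarrow> real^'p^'p" where
  "scaled_gram X \<rho> = inverse \<rho> *\<^sub>R (transpose X ** X) + mat 1"

lemma ridge_gram_eq_scaleR: "\<rho> \<noteq> 0 \<Longrightarrow> ridge_gram X \<rho> = \<rho> *\<^sub>R scaled_gram X \<rho>"
  by (simp add: ridge_gram_def scaled_gram_def scaleR_add_right)

lemma transpose_ridge_gram: "transpose (ridge_gram X \<rho>) = ridge_gram X \<rho>"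
  by (simp add: ridge_gram_def transpose_add transpose_scalar matrix_transpose_mul)

lemma ridge_gram_diag_ge: "\<rho> \<le> ridge_gram X \<rho> $ i $ i"
proof -
  have "(transpose X ** X)$i$i = (\<Sum>l\<in>UNIV. (X$l$i)\<^sup>2)"
    by (simp add: matrix_matrix_mult_def transpose_def power2_eq_square)
  then show ?thesis
    by (simp add: ridge_gram_def mat_def sum_nonneg)
qed

lemma psd_scaled_gram: "0 < \<rho> \<Longrightarrow> psd (scaled_gram X \<rho>)"
  unfolding scaled_gram_def
  by (intro psd_add psd_scaleR psd_transpose_mult_self psd_mat_1) simp

lemma trace_le_inner_scaled_gram:
  assumes "0 < \<rho>" "psd \<Psi>"
  shows "(\<Sum>i\<in>UNIV. \<Psi>$i$i) \<le> scaled_gram X \<rho> \<bullet> \<Psi>"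
proof -
  have "0 \<le> (inverse \<rho> *\<^sub>R (transpose X ** X)) \<bullet> \<Psi>"
    using assms by (intro psd_inner_nonneg psd_scaleR psd_transpose_mult_self) simp_all
  then show ?thesis
    by (simp add: scaled_gram_def inner_add_left inner_mat_1)
qed

lemma quadratic_form_add:
  fixes G :: "real^'p^'p"
  assumes "transpose G = G"
  shows "(a + d) \<bullet> (G *v (a + d)) = a \<bullet> (G *v a) + 2 * ((G *v a) \<bullet> d) + d \<bullet> (G *v d)"
proof -
  have "a \<bullet> (G *v d) = (G *v a) \<bullet> d"
    by (metis assms dot_lmul_matrix inner_commute transpose_matrix_vector)
  then show ?thesis
    by (simp add: matrix_vector_right_distrib inner_add_left inner_add_right inner_commute)
qed

lemma ridge_obj_eq_quadratic:
  "ridge_obj X y \<rho> b = y \<bullet> y - 2 * ((transpose X *v y) \<bullet> b) + b \<bullet> (ridge_gram X \<rho> *v b)"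
proof -
  have Xt: "y \<bullet> (X *v b) = (transpose X *v y) \<bullet> b" for y
    by (metis dot_lmul_matrix transpose_matrix_vector)
  have XtX: "(X *v b) \<bullet> (X *v b) = b \<bullet> ((transpose X ** X) *v b)"
    using Xt[of "X *v b"] matrix_vector_mul_assoc[of "transpose X" X b] inner_commute by metis
  have "(X *v b) v* X = (transpose X ** X) *v b"
    by (metis transpose_matrix_vector matrix_vector_mul_assoc)
  then show ?thesis
    unfolding ridge_obj_def power2_norm_eq_inner ridge_gram_def
    by (simp add: inner_diff_left inner_diff_right XtX Xt matrix_vector_mult_add_rdistrib
        inner_add_right inner_commute algebra_simps scaleR_matrix_vector_assoc[symmetric])
qed

lemma ridge_obj_add:
  "ridge_obj X y \<rho> (b + v) = ridge_obj X y \<rho> b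
     + 2 * ((ridge_gram X \<rho> *v b - transpose X *v y) \<bullet> v) + v \<bullet> (ridge_gram X \<rho> *v v)"
  unfolding ridge_obj_eq_quadratic quadratic_form_add[OF transpose_ridge_gram]
  by (simp add: inner_diff_left inner_add_right algebra_simps)

lemma sdp_obj_eq_quadratic:
  "2 * sdp_obj X y \<rho> b B = y \<bullet> y - 2 * ((transpose X *v y) \<bullet> b) + ridge_gram X \<rho> \<bullet> B"
proof -
  let ?C = "sdp_cost X y \<rho>" and ?D = "block_mat 1 b B"
  have none: "?C$None \<bullet> ?D$None = y \<bullet> y - (transpose X *v y) \<bullet> b"
    by (simp add: inner_vec_option sdp_cost_def block_mat_def inner_vec_def sum_negf)
  have some: "?C$Some i \<bullet> ?D$Some i = - (transpose X *v y)$i * b$i + ridge_gram X \<rho> $ i \<bullet> B $ i" for i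
    by (simp add: inner_vec_option sdp_cost_def block_mat_def ridge_gram_def inner_vec_def)
  have "?C \<bullet> ?D = ?C$None \<bullet> ?D$None + (\<Sum>i\<in>UNIV. ?C$Some i \<bullet> ?D$Some i)"
    by (simp add: inner_vec_def sum_UNIV_option)
  also have "\<dots> = y \<bullet> y - 2 * ((transpose X *v y) \<bullet> b) + ridge_gram X \<rho> \<bullet> B"
    unfolding none some by (simp add: sum.distrib sum_negf sum_subtractf inner_vec_def)
  finally have "?C \<bullet> ?D = y \<bullet> y - 2 * ((transpose X *v y) \<bullet> b) + ridge_gram X \<rho> \<bullet> B" .
  then show ?thesis
    unfolding sdp_obj_def tr_inner_eq_inner by simp
qed

lemma sdp_obj_eq_ridge_obj:
  "2 * sdp_obj X y \<rho> b B = ridge_obj X y \<rho> b + ridge_gram X \<rho> \<bullet> (B - outer b b)"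
  unfolding sdp_obj_eq_quadratic ridge_obj_eq_quadratic
  by (simp add: inner_diff_right inner_outer)

lemma quadratic_form_XS_XSt_nonneg: "0 \<le> x \<bullet> (XS_XSt X S *v x)"
proof -
  have "x \<bullet> (XS_XSt X S *v x) = (\<Sum>i\<in>UNIV. \<Sum>l\<in>UNIV. \<Sum>j\<in>S. x$i * (X$i$j * X$l$j) * x$l)"
    by (simp add: quadratic_form_eq_sum XS_XSt_def sum_distrib_left sum_distrib_right)
  also have "\<dots> = (\<Sum>i\<in>UNIV. \<Sum>j\<in>S. \<Sum>l\<in>UNIV. x$i * (X$i$j * X$l$j) * x$l)"
    by (rule sum.cong[OF refl], rule sum.swap)
  also have "\<dots> = (\<Sum>j\<in>S. \<Sum>i\<in>UNIV. \<Sum>l\<in>UNIV. x$i * (X$i$j * X$l$j) * x$l)"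
    by (rule sum.swap)
  also have "\<dots> = (\<Sum>j\<in>S. (\<Sum>i\<in>UNIV. x$i * X$i$j)\<^sup>2)"
    by (simp add: power2_eq_square sum_product mult_ac)
  finally show ?thesis
    by (simp add: sum_nonneg)
qed

lemma invertible_mat_1_add:
  fixes P :: "real^'n^'n"
  assumes "\<And>x. 0 \<le> x \<bullet> (P *v x)"
  shows "invertible (mat 1 + P)"
proof -
  have "x = 0" if "(mat 1 + P) *v x = 0" for x
  proof -
    have "x \<bullet> x + x \<bullet> (P *v x) = 0"
      using that by (simp add: matrix_vector_mult_add_rdistrib inner_add_right flip: inner_add_right)
    then show "x = 0"
      using assms[of x] by (smt (verit) inner_ge_zero inner_eq_zero_iff)
  qed
  then show ?thesis
    unfolding invertible_left_inverse matrix_left_invertible_ker by blast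
qed

lemma matrix_inv_mult_vector:
  assumes "invertible A"
  shows "matrix_inv A *v (A *v x) = (x::'a::field^'n)"
proof -
  have "matrix_inv A ** A = mat 1"
    using someI_ex[OF assms[unfolded invertible_def]] unfolding matrix_inv_def by blast
  then show ?thesis
    by (simp add: matrix_vector_mul_assoc)
qed

locale restricted_ridge =
  fixes X :: "real^'p^'n" and y :: "real^'n" and \<rho> :: real and S :: "'p set" and bs :: "real^'p"
  assumes rho_pos: "\<rho> > 0" and ridge_min: "is_restricted_ridge_min X y \<rho> S bs"
begin

definition residual :: "real^'n" where
  "residual = y - X *v bs"

definition corr :: "'p \<Rightarrow> real" where
  "corr i = column i X \<bullet> residual"

lemma bs_eq_0: "i \<notin> S \<Longrightarrow> bs$i = 0"
  using ridge_min unfolding is_restricted_ridge_min_def by blast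

lemma ridge_gradient_nth: "(ridge_gram X \<rho> *v bs - transpose X *v y)$i = \<rho> * bs$i - corr i"
proof -
  have "corr i = (transpose X *v residual)$i"
    by (simp add: corr_def column_def inner_vec_def matrix_vector_mult_def transpose_def mult.commute)
  then show ?thesis
    by (simp add: ridge_gram_def residual_def matrix_vector_mult_add_rdistrib matrix_vector_mult_diff_distrib
        matrix_vector_mul_assoc scaleR_matrix_vector_assoc[symmetric])
qed

lemma corr_eq: "i \<in> S \<Longrightarrow> corr i = \<rho> * bs$i"
proof (rule ccontr)
  assume "i \<in> S" "corr i \<noteq> \<rho> * bs$i"
  define g where "g = \<rho> * bs$i - corr i"
  define G where "G = ridge_gram X \<rho> $ i $ i"
  have "g \<noteq> 0" "G > 0"
    using \<open>corr i \<noteq> \<rho> * bs$i\<close> ridge_gram_diag_ge[of \<rho> X i] rho_pos by (auto simp: g_def G_def)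
  define t where "t = - g / G"
  have lin: "(ridge_gram X \<rho> *v bs - transpose X *v y) \<bullet> (t *\<^sub>R axis i 1) = t * g"
    by (simp only: inner_scaleR_right cart_eq_inner_axis[symmetric] ridge_gradient_nth g_def)
  have quad: "(t *\<^sub>R axis i 1) \<bullet> (ridge_gram X \<rho> *v (t *\<^sub>R axis i 1)) = t\<^sup>2 * G"
    by (simp add: matrix_vector_mult_scaleR quadratic_form_axis G_def power2_eq_square)
  have "ridge_obj X y \<rho> bs \<le> ridge_obj X y \<rho> (bs + t *\<^sub>R axis i 1)"
    using ridge_min \<open>i \<in> S\<close> bs_eq_0 unfolding is_restricted_ridge_min_def by (simp add: axis_def)
  also have "\<dots> = ridge_obj X y \<rho> bs + 2 * t * g + t\<^sup>2 * G"
    unfolding ridge_obj_add lin quad by simp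
  also have "\<dots> = ridge_obj X y \<rho> bs - g\<^sup>2 / G"
    using \<open>G > 0\<close> by (simp add: t_def power2_eq_square field_simps)
  finally show False
    using \<open>g \<noteq> 0\<close> \<open>G > 0\<close> by (smt (verit) divide_pos_pos zero_less_power2)
qed

lemma ridge_gradient_eq: "ridge_gram X \<rho> *v bs - transpose X *v y = (\<chi> i. if i \<in> S then 0 else - corr i)"
  unfolding vec_eq_iff ridge_gradient_nth by (simp add: corr_eq bs_eq_0)

lemma ridge_obj_bs_add:
  "ridge_obj X y \<rho> (bs + v) = ridge_obj X y \<rho> bs - 2 * (\<Sum>i\<in>-S. corr i * v$i) + v \<bullet> (ridge_gram X \<rho> *v v)"
proof -
  have "(\<chi> i. if i \<in> S then 0 else - corr i) \<bullet> v = - (\<Sum>i\<in>-S. corr i * v$i)"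
    by (simp add: inner_vec_def if_distrib[of "\<lambda>x. x * _"] sum.If_cases sum_negf Compl_eq_Diff_UNIV)
  then show ?thesis
    unfolding ridge_obj_add ridge_gradient_eq by simp
qed

lemma XS_XSt_mult_residual: "XS_XSt X S *v residual = \<rho> *\<^sub>R (X *v bs)"
proof -
  have "(XS_XSt X S *v residual)$i = (\<Sum>l\<in>UNIV. \<Sum>j\<in>S. X$i$j * (X$l$j * residual$l))" for i
    by (simp add: XS_XSt_def matrix_vector_mult_def sum_distrib_right mult.assoc)
  also have "(\<Sum>l\<in>UNIV. \<Sum>j\<in>S. X$i$j * (X$l$j * residual$l)) = (\<Sum>j\<in>S. X$i$j * corr j)" for i
    by (subst sum.swap) (simp add: corr_def column_def inner_vec_def sum_distrib_left mult.commute)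
  also have "(\<Sum>j\<in>S. X$i$j * corr j) = \<rho> * (\<Sum>j\<in>UNIV. X$i$j * bs$j)" for i
  proof -
    have "(\<Sum>j\<in>UNIV. X$i$j * bs$j) = (\<Sum>j\<in>S. X$i$j * bs$j)"
      by (rule sum.mono_neutral_right) (auto simp: bs_eq_0)
    then show ?thesis
      by (simp add: corr_eq sum_distrib_left mult_ac)
  qed
  finally show ?thesis
    by (simp add: vec_eq_iff matrix_vector_mult_def)
qed

lemma Mmat_mult_y: "Mmat X \<rho> S *v y = residual"
proof -
  let ?A = "mat 1 + inverse \<rho> *\<^sub>R XS_XSt X S"
  have "0 \<le> x \<bullet> ((inverse \<rho> *\<^sub>R XS_XSt X S) *v x)" for x
    using quadratic_form_XS_XSt_nonneg[of x X S] rho_pos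
    by (auto simp: scaleR_matrix_vector_assoc[symmetric] intro!: mult_nonneg_nonneg)
  then have "invertible ?A"
    by (rule invertible_mat_1_add)
  have "?A *v residual = residual + inverse \<rho> *\<^sub>R (XS_XSt X S *v residual)"
    by (simp add: matrix_vector_mult_add_rdistrib scaleR_matrix_vector_assoc[symmetric])
  then have "?A *v residual = y"
    using rho_pos unfolding XS_XSt_mult_residual by (simp add: residual_def)
  then show ?thesis
    unfolding Mmat_def using matrix_inv_mult_vector[OF \<open>invertible ?A\<close>] by metis
qed

lemma column_inner_Mmat_y: "column i X \<bullet> (Mmat X \<rho> S *v y) = corr i"
  by (simp add: Mmat_mult_y corr_def)

lemma sdp_feasible_candidate: "card S = k \<Longrightarrow> sdp_feasible k bs (outer bs bs) (indicator_vec S)"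
  unfolding sdp_feasible_def symmetric_mat_def sum_indicator_vec transpose_outer
  using psd_block_mat_outer_add[OF psd_zero, of bs]
  by (simp add: psd_mat22_iff indicator_vec_def outer_def bs_eq_0 power2_eq_square)

lemma sdp_obj_candidate: "2 * sdp_obj X y \<rho> bs (outer bs bs) = ridge_obj X y \<rho> bs"
  by (simp add: sdp_obj_eq_ridge_obj)

lemma sdp_optimalD:
  "sdp_optimal X y \<rho> k bs (outer bs bs) (indicator_vec S) \<Longrightarrow> sdp_feasible k b B z
    \<Longrightarrow> ridge_obj X y \<rho> bs \<le> 2 * sdp_obj X y \<rho> b B"
  unfolding sdp_optimal_def using sdp_obj_candidate by force

lemma sdp_obj_eq_ridge_obj_bs:
  "2 * sdp_obj X y \<rho> b B = ridge_obj X y \<rho> bs - 2 * (\<Sum>i\<in>-S. corr i * b$i)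
     + ridge_gram X \<rho> \<bullet> (B - outer b b + outer (b - bs) (b - bs))"
proof -
  have "(\<Sum>i\<in>-S. corr i * (b - bs)$i) = (\<Sum>i\<in>-S. corr i * b$i)"
    by (rule sum.cong) (simp_all add: bs_eq_0)
  then show ?thesis
    using sdp_obj_eq_ridge_obj[of X y \<rho> b B] ridge_obj_bs_add[of "b - bs"]
    by (simp add: inner_add_right inner_outer)
qed

end

section \<open>Weak duality\<close>

definition multiplier_set :: "'p set \<Rightarrow> ('p \<Rightarrow> real) \<Rightarrow> (real^'p) set" where
  "multiplier_set S c = {d. (\<forall>i. 0 \<le> d$i) \<and>
     (\<exists>lam\<ge>0. (\<forall>i\<in>S. lam = d$i * (c i)\<^sup>2) \<and> (\<forall>i. i \<notin> S \<longrightarrow> (c i)\<^sup>2 \<le> lam * d$i))}"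

lemma multiplier_set_nonneg: "d \<in> multiplier_set S c \<Longrightarrow> 0 \<le> d$i"
  unfolding multiplier_set_def by blast

context restricted_ridge
begin

text \<open>Weak duality, coordinate by coordinate: each \<open>2 \<times> 2\<close> constraint is paired with a psd
  \<open>2 \<times> 2\<close> multiplier built from \<open>d\<^sub>i\<close>, \<open>lam\<close> and \<open>corr i\<close>.\<close>

lemma multiplier_coordinate_bound:
  assumes M: "psd (mat22 z b b B)" and d: "0 \<le> d" and lam: "0 \<le> lam"
    and inS: "i \<in> S \<Longrightarrow> lam = d * (corr i)\<^sup>2" and outS: "i \<notin> S \<Longrightarrow> (corr i)\<^sup>2 \<le> lam * d"
  shows "lam / \<rho> * ((if i \<in> S then 1 else 0) - z)
    \<le> \<rho> * d * (B - 2 * b * bs$i + (bs$i)\<^sup>2) - (if i \<in> S then 0 else 2 * corr i * b)"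
proof (cases "i \<in> S")
  case True
  have "0 \<le> z * (bs$i)\<^sup>2 + 2 * b * (- bs$i) + B * 1"
    by (rule psd_mat22_inner_nonneg[OF M]) simp_all
  then have "0 \<le> \<rho> * d * (z * (bs$i)\<^sup>2 - 2 * b * bs$i + B)"
    using rho_pos d by simp
  moreover have "lam / \<rho> = \<rho> * d * (bs$i)\<^sup>2"
    using inS[OF True] corr_eq[OF True] rho_pos by (simp add: power2_eq_square field_simps)
  ultimately show ?thesis
    using True by (simp add: algebra_simps)
next
  case False
  have "0 \<le> z * lam + 2 * b * (- \<rho> * corr i) + B * (\<rho>\<^sup>2 * d)"
    using outS[OF False] rho_pos d lam
    by (intro psd_mat22_inner_nonneg[OF M]) (simp_all add: power_mult_distrib mult_left_mono algebra_simps)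
  then have "0 \<le> (z * lam + 2 * b * (- \<rho> * corr i) + B * (\<rho>\<^sup>2 * d)) / \<rho>"
    using rho_pos by simp
  then show ?thesis
    using False rho_pos bs_eq_0[OF False] by (simp add: power2_eq_square field_simps)
qed

lemma sdp_obj_lower_bound:
  assumes dual: "psd (scaled_gram X \<rho> - diag_mat d)" and feas: "sdp_feasible k b B z"
  shows "ridge_obj X y \<rho> bs + (\<Sum>i\<in>UNIV. \<rho> * d$i * (B$i$i - 2 * b$i * bs$i + (bs$i)\<^sup>2)
      - (if i \<in> S then 0 else 2 * corr i * b$i)) \<le> 2 * sdp_obj X y \<rho> b B"
proof -
  define \<Psi> where "\<Psi> = B - outer b b + outer (b - bs) (b - bs)"
  have "psd \<Psi>"
    using feas unfolding \<Psi>_def sdp_feasible_def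
    by (blast intro: psd_add psd_outer psd_block_mat_imp_psd_Schur)
  then have "diag_mat d \<bullet> \<Psi> \<le> scaled_gram X \<rho> \<bullet> \<Psi>"
    using psd_inner_nonneg[OF dual] by (simp add: inner_diff_left)
  then have "\<rho> * (\<Sum>i\<in>UNIV. d$i * \<Psi>$i$i) \<le> ridge_gram X \<rho> \<bullet> \<Psi>"
    using rho_pos by (simp add: ridge_gram_eq_scaleR inner_diag_mat)
  moreover have "\<Psi>$i$i = B$i$i - 2 * b$i * bs$i + (bs$i)\<^sup>2" for i
    by (simp add: \<Psi>_def outer_def power2_eq_square algebra_simps)
  moreover have "(\<Sum>i\<in>UNIV. if i \<in> S then 0 else 2 * corr i * b$i) = 2 * (\<Sum>i\<in>-S. corr i * b$i)"
    by (simp add: sum.If_cases sum_distrib_left mult.assoc)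
  ultimately show ?thesis
    unfolding sdp_obj_eq_ridge_obj_bs \<Psi>_def[symmetric] sum_subtractf
    by (simp add: sum_distrib_left mult.assoc)
qed

lemma sdp_obj_candidate_le:
  assumes card: "card S = k" and d: "d \<in> multiplier_set S corr"
    and dual: "psd (scaled_gram X \<rho> - diag_mat d)" and feas: "sdp_feasible k b B z"
  shows "sdp_obj X y \<rho> bs (outer bs bs) \<le> sdp_obj X y \<rho> b B"
proof -
  obtain lam where lam: "0 \<le> lam"
    and inS: "\<forall>i\<in>S. lam = d$i * (corr i)\<^sup>2" and outS: "\<forall>i. i \<notin> S \<longrightarrow> (corr i)\<^sup>2 \<le> lam * d$i"
    using d unfolding multiplier_set_def by blast
  have M: "\<And>i. psd (mat22 (z$i) (b$i) (b$i) (B$i$i))" and zsum: "(\<Sum>i\<in>UNIV. z$i) \<le> real k"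
    using feas unfolding sdp_feasible_def by auto
  have "0 \<le> lam / \<rho> * (real (card S) - (\<Sum>i\<in>UNIV. z$i))"
    using zsum card lam rho_pos by simp
  also have "\<dots> = (\<Sum>i\<in>UNIV. lam / \<rho> * ((if i \<in> S then 1 else 0) - z$i))"
    unfolding sum_distrib_left[symmetric] sum_subtractf
    using sum_indicator_vec[of S] by (simp add: indicator_vec_def)
  also have "\<dots> \<le> (\<Sum>i\<in>UNIV. \<rho> * d$i * (B$i$i - 2 * b$i * bs$i + (bs$i)\<^sup>2)
      - (if i \<in> S then 0 else 2 * corr i * b$i))"
    using M multiplier_set_nonneg[OF d] lam inS outS
    by (intro sum_mono multiplier_coordinate_bound) auto
  finally show ?thesis
    using sdp_obj_lower_bound[OF dual feas] sdp_obj_candidate by linarith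
qed
end

section \<open>Psd matrices dominating a diagonal\<close>

lemma psd_above_diag_mat_bound:
  assumes "psd (M - diag_mat d)" "\<forall>i. 0 \<le> d$i"
  shows "d \<in> cbox 0 (\<chi> i. norm M)"
  unfolding mem_box_cart
proof
  fix i
  have "d$i \<le> M$i$i"
    by (rule psd_minus_diag_mat_le[OF assms(1)])
  also have "\<dots> \<le> norm M"
    using component_le_norm_cart[of "M$i" i] Finite_Cartesian_Product.norm_nth_le[of M i] by linarith
  finally show "0 $ i \<le> d $ i \<and> d $ i \<le> (\<chi> i. norm M) $ i"
    using assms(2) by simp
qed

lemma convex_psd_above_diag_mat:
  fixes T :: "(real^'p) set"
  assumes "convex T"
  shows "convex {M. \<exists>d\<in>T. psd (M - diag_mat d)}"
  unfolding convex_def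
proof (intro ballI allI impI, elim CollectE bexE)
  fix M N :: "real^'p^'p" and u v :: real and d e
  assume uv: "0 \<le> u" "0 \<le> v" "u + v = 1" and d: "d \<in> T" "psd (M - diag_mat d)"
    and e: "e \<in> T" "psd (N - diag_mat e)"
  have "u *\<^sub>R d + v *\<^sub>R e \<in> T"
    using assms d e uv unfolding convex_def by blast
  moreover have "u *\<^sub>R M + v *\<^sub>R N - diag_mat (u *\<^sub>R d + v *\<^sub>R e) =
      u *\<^sub>R (M - diag_mat d) + v *\<^sub>R (N - diag_mat e)"
    by (simp add: diag_mat_add diag_mat_scaleR algebra_simps)
  ultimately show "u *\<^sub>R M + v *\<^sub>R N \<in> {M. \<exists>d\<in>T. psd (M - diag_mat d)}"
    using d e uv by (metis (mono_tags, lifting) mem_Collect_eq psd_add psd_scaleR)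
qed

text \<open>Closedness needs \<open>T \<ge> 0\<close>: it bounds the diagonals \<open>d\<close> that can occur near a given matrix,
  so locally the set is a sum of the closed psd cone and a compact set.\<close>

lemma closed_psd_above_diag_mat:
  fixes T :: "(real^'p) set"
  assumes T: "closed T" "\<forall>d\<in>T. \<forall>i. 0 \<le> d$i"
  shows "closed {M. \<exists>d\<in>T. psd (M - diag_mat d)}"
  unfolding closed_sequential_limits
proof (intro allI impI, elim conjE)
  fix Ms :: "nat \<Rightarrow> real^'p^'p" and L
  assume Ms: "\<forall>n. Ms n \<in> {M. \<exists>d\<in>T. psd (M - diag_mat d)}" and lim: "Ms \<longlonglongrightarrow> L"
  define R where "R = norm L + 1"
  define C where "C = (\<Union>P\<in>{P. psd P}. \<Union>D\<in>diag_mat ` (T \<inter> cbox 0 (\<chi> i. R)). {P + D})"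
  have "compact (diag_mat ` (T \<inter> cbox 0 (\<chi> i. R)))"
    using T(1) linear_continuous_on[OF bounded_linear_diag_mat]
    by (intro compact_continuous_image closed_Int_compact) (auto intro: continuous_on_subset)
  then have "closed C"
    unfolding C_def by (intro closed_compact_sums closed_psd)
  moreover have "\<forall>\<^sub>F n in sequentially. norm (Ms n) < R"
    using tendsto_norm[OF lim] unfolding R_def by (rule order_tendstoD) simp
  then have "\<forall>\<^sub>F n in sequentially. Ms n \<in> C"
  proof (rule eventually_mono)
    fix n assume "norm (Ms n) < R"
    moreover obtain d where d: "d \<in> T" "psd (Ms n - diag_mat d)"
      using Ms by blast
    ultimately have "d \<in> cbox 0 (\<chi> i. R)"
      using psd_above_diag_mat_bound[OF d(2)] T(2) unfolding mem_box_cart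
      by (smt (verit, best) vec_lambda_beta)
    then show "Ms n \<in> C"
      unfolding C_def using d by (intro UN_I[of "Ms n - diag_mat d"] UN_I[of "diag_mat d"]) auto
  qed
  ultimately have "L \<in> C"
    using Lim_in_closed_set[OF _ _ _ lim] by simp
  then obtain P d where "psd P" "d \<in> T" "L = P + diag_mat d"
    unfolding C_def by blast
  then show "L \<in> {M. \<exists>d\<in>T. psd (M - diag_mat d)}"
    by (intro CollectI bexI[of _ d]) auto
qed

text \<open>If \<open>A\<close> beats some \<open>D(d)\<close>, \<open>d \<in> T\<close>, against every psd \<open>\<Psi>\<close>, then \<open>A - D(d) \<succeq> 0\<close> for a single
  \<open>d \<in> T\<close>: otherwise a hyperplane separates \<open>A\<close> from the closed convex set \<open>T + psd cone\<close>, and its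
  normal, symmetrized, is a \<open>\<Psi>\<close> violating the hypothesis.\<close>

lemma psd_minus_diag_mat_if_dominates:
  fixes A :: "real^'p^'p"
  assumes T: "convex T" "closed T" "\<forall>d\<in>T. \<forall>i. 0 \<le> d$i"
    and A: "transpose A = A"
    and dominates: "\<And>\<Psi>. psd \<Psi> \<Longrightarrow> \<exists>d\<in>T. diag_mat d \<bullet> \<Psi> \<le> A \<bullet> \<Psi>"
  shows "\<exists>d\<in>T. psd (A - diag_mat d)"
proof (rule ccontr)
  define K where "K = {M. \<exists>d\<in>T. psd (M - diag_mat d)}"
  assume "\<not> (\<exists>d\<in>T. psd (A - diag_mat d))"
  then have "A \<notin> K" unfolding K_def by blast
  then obtain P c where sepA: "P \<bullet> A < c" and sepK: "\<And>M. M \<in> K \<Longrightarrow> c < P \<bullet> M"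
    using separating_hyperplane_closed_point[of K A] T
      convex_psd_above_diag_mat closed_psd_above_diag_mat unfolding K_def by blast
  have diag_in_K: "diag_mat d + M \<in> K" if "d \<in> T" "psd M" for d M
    unfolding K_def using that by (intro CollectI bexI[of _ d]) auto
  obtain d0 where "d0 \<in> T"
    using dominates[OF psd_zero] by blast
  have "0 \<le> P \<bullet> outer v v" for v
  proof (rule ccontr)
    assume neg: "\<not> 0 \<le> P \<bullet> outer v v"
    define t where "t = (\<bar>P \<bullet> diag_mat d0\<bar> + \<bar>c\<bar> + 1) / - (P \<bullet> outer v v)"
    have "0 \<le> t"
      using neg unfolding t_def by (intro divide_nonneg_pos) auto
    then have "c < P \<bullet> diag_mat d0 + t * (P \<bullet> outer v v)"
      using sepK[OF diag_in_K[OF \<open>d0 \<in> T\<close> psd_scaleR[OF _ psd_outer]]] by (simp add: inner_add_right)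
    moreover have "t * (P \<bullet> outer v v) = - (\<bar>P \<bullet> diag_mat d0\<bar> + \<bar>c\<bar> + 1)"
      using neg by (simp add: t_def)
    ultimately show False by linarith
  qed
  then obtain d where "d \<in> T" and le: "diag_mat d \<bullet> ((1/2) *\<^sub>R (P + transpose P)) \<le> A \<bullet> ((1/2) *\<^sub>R (P + transpose P))"
    using dominates[OF psd_symmetric_part] by blast
  have "c < P \<bullet> diag_mat d"
    using sepK diag_in_K[OF \<open>d \<in> T\<close> psd_zero] by simp
  also have "\<dots> = (1/2) *\<^sub>R (P + transpose P) \<bullet> diag_mat d"
    by (rule inner_symmetric_part[OF transpose_diag_mat, symmetric])
  also have "\<dots> \<le> (1/2) *\<^sub>R (P + transpose P) \<bullet> A"
    using le by (simp only: inner_commute)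
  also have "\<dots> = P \<bullet> A"
    by (rule inner_symmetric_part[OF A])
  finally show False
    using sepA by simp
qed

lemma convex_multiplier_set: "convex (multiplier_set S c)"
  unfolding convex_def
proof (intro ballI allI impI)
  fix d e :: "real^'a" and u v :: real
  assume d: "d \<in> multiplier_set S c" and e: "e \<in> multiplier_set S c" and uv: "0 \<le> u" "0 \<le> v" "u + v = 1"
  obtain l1 where l1: "0 \<le> l1" "\<forall>i\<in>S. l1 = d$i * (c i)\<^sup>2" "\<forall>i. i \<notin> S \<longrightarrow> (c i)\<^sup>2 \<le> l1 * d$i"
    and d0: "\<forall>i. 0 \<le> d$i"
    using d unfolding multiplier_set_def by blast
  obtain l2 where l2: "0 \<le> l2" "\<forall>i\<in>S. l2 = e$i * (c i)\<^sup>2" "\<forall>i. i \<notin> S \<longrightarrow> (c i)\<^sup>2 \<le> l2 * e$i"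
    and e0: "\<forall>i. 0 \<le> e$i"
    using e unfolding multiplier_set_def by blast
  show "u *\<^sub>R d + v *\<^sub>R e \<in> multiplier_set S c"
    unfolding multiplier_set_def
  proof (intro CollectI conjI allI ballI impI exI[of _ "u * l1 + v * l2"])
    fix i
    show "0 \<le> (u *\<^sub>R d + v *\<^sub>R e)$i"
      using uv d0 e0 by simp
    assume "i \<notin> S"
    then have "(c i)\<^sup>2 \<le> (u * l1 + v * l2) * (u * d$i + v * e$i)"
      using uv l1 l2 d0 e0 by (intro le_mult_convex_combination) auto
    then show "(c i)\<^sup>2 \<le> (u * l1 + v * l2) * (u *\<^sub>R d + v *\<^sub>R e)$i"
      by simp
  next
    show "0 \<le> u * l1 + v * l2"
      using uv l1 l2 by simp
    fix i assume "i \<in> S"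
    then have "l1 = d$i * (c i)\<^sup>2" "l2 = e$i * (c i)\<^sup>2"
      using l1 l2 by auto
    then show "u * l1 + v * l2 = (u *\<^sub>R d + v *\<^sub>R e)$i * (c i)\<^sup>2"
      by (simp add: distrib_right mult.assoc)
  qed
qed

lemma closed_multiplier_set:
  assumes "i0 \<in> S"
  shows "closed (multiplier_set S c)"
proof -
  have "multiplier_set S c = {d. \<forall>i. 0 \<le> d$i \<and> (i \<in> S \<longrightarrow> d$i0 * (c i0)\<^sup>2 = d$i * (c i)\<^sup>2)
      \<and> (i \<notin> S \<longrightarrow> (c i)\<^sup>2 \<le> d$i0 * (c i0)\<^sup>2 * d$i)}" (is "_ = ?C")
  proof (intro set_eqI iffI)
    fix d assume "d \<in> multiplier_set S c"
    then obtain lam where "\<forall>i. 0 \<le> d$i" "\<forall>i\<in>S. lam = d$i * (c i)\<^sup>2" "\<forall>i. i \<notin> S \<longrightarrow> (c i)\<^sup>2 \<le> lam * d$i"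
      unfolding multiplier_set_def by blast
    moreover have "lam = d$i0 * (c i0)\<^sup>2"
      using calculation(2) assms by blast
    ultimately show "d \<in> ?C"
      by auto
  next
    fix d assume "d \<in> ?C"
    then show "d \<in> multiplier_set S c"
      unfolding multiplier_set_def by (intro CollectI conjI exI[of _ "d$i0 * (c i0)\<^sup>2"]) auto
  qed
  also have "closed ?C"
    by (intro closed_Collect_all closed_Collect_conj closed_Collect_imp open_Collect_const closed_Collect_le
        closed_Collect_eq continuous_on_mult continuous_on_const linear_continuous_on bounded_linear_vec_nth)
  finally show ?thesis .
qed

section \<open>Necessity of the multipliers\<close>

lemma exists_pos_le_AM_GM:
  fixes a p q :: real
  assumes "0 \<le> p" "0 \<le> q" "4 * p * q \<le> a\<^sup>2" "0 < a"
  shows "\<exists>lam>0. lam * p + q / lam \<le> a"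
proof (cases "p = 0")
  case True
  define lam where "lam = (q + 1) / a"
  have "lam * p + q / lam = q * a / (q + 1)"
    using True assms by (simp add: lam_def)
  also have "\<dots> \<le> a"
    using assms by (simp add: field_simps)
  finally show ?thesis
    using assms by (intro exI[of _ lam]) (simp add: lam_def)
next
  case False
  define lam where "lam = a / (2 * p)"
  have "lam * p + q / lam = a / 2 + 2 * p * q / a"
    using False assms by (simp add: lam_def field_simps)
  also have "2 * p * q / a \<le> a / 2"
    using assms by (simp add: field_simps power2_eq_square)
  finally show ?thesis
    using False assms by (intro exI[of _ lam]) (simp add: lam_def)
qed

lemma exists_step_between:
  fixes a p q \<rho> :: real
  assumes "0 < \<rho>" "0 \<le> a" "0 \<le> p" "0 \<le> q" "a\<^sup>2 < 4 * p * q"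
  shows "\<exists>t. \<rho> * a < 2 * t * q \<and> t\<^sup>2 * q < \<rho>\<^sup>2 * p"
proof -
  have "0 < p * q"
    using assms(5) zero_le_power2[of a] by linarith
  then have q: "0 < q"
    using assms(3,4) by (auto simp: zero_less_mult_iff)
  define m where "m = sqrt (p * q)"
  have m: "0 < m" and m2: "m\<^sup>2 = p * q"
    using \<open>0 < p * q\<close> by (simp_all add: m_def)
  have "(2 * m)\<^sup>2 = 4 * (p * q)"
    using m2 by (simp add: power_mult_distrib)
  then have "a\<^sup>2 < (2 * m)\<^sup>2"
    using assms(5) by (simp add: mult.assoc)
  then have am: "a < 2 * m"
    by (rule power2_less_imp_less) (use m in simp)
  define t where "t = \<rho> * (a + 2 * m) / (4 * q)"
  have "2 * t * q = \<rho> * (a + 2 * m) / 2"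
    using q by (simp add: t_def field_simps)
  moreover have "\<rho> * a < \<rho> * (2 * m)"
    using am assms(1) by simp
  ultimately have "\<rho> * a < 2 * t * q"
    by (simp add: algebra_simps)
  moreover have "(a + 2 * m)\<^sup>2 < (4 * m)\<^sup>2"
    using am assms(2) m by (intro power_strict_mono) auto
  then have "\<rho>\<^sup>2 * (a + 2 * m)\<^sup>2 < \<rho>\<^sup>2 * (16 * (p * q))"
    using m2 assms(1) by (simp add: power_mult_distrib)
  moreover have "(t\<^sup>2 * q) * (16 * q) = \<rho>\<^sup>2 * (a + 2 * m)\<^sup>2"
    using q by (simp add: t_def power2_eq_square field_simps)
  ultimately have "\<rho> * a < 2 * t * q" "(t\<^sup>2 * q) * (16 * q) < (\<rho>\<^sup>2 * p) * (16 * q)"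
    by (simp_all add: algebra_simps)
  then show ?thesis
    using q by (intro exI[of _ t]) simp
qed

lemma tendsto_sum_ratio_at_right_0:
  assumes "\<forall>i\<in>S. a i \<noteq> (0::real)"
  shows "((\<lambda>s. \<Sum>i\<in>S. P i / (a i + s * P i)) \<longlongrightarrow> (\<Sum>i\<in>S. P i / a i)) (at_right 0)"
proof (rule tendsto_sum)
  fix i assume "i \<in> S"
  have "((\<lambda>s. P i / (a i + s * P i)) \<longlongrightarrow> P i / (a i + 0 * P i)) (at_right 0)"
    using assms \<open>i \<in> S\<close> by (intro tendsto_intros) auto
  then show "((\<lambda>s. P i / (a i + s * P i)) \<longlongrightarrow> P i / a i) (at_right 0)"
    by simp
qed

lemma sq_div_sq_add_le:
  fixes s x P :: real
  assumes "0 < s" "0 \<le> P"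
  shows "(s * x * P)\<^sup>2 / ((s * x * P)\<^sup>2 + s * P) \<le> s * x\<^sup>2 * P"
proof (cases "P = 0")
  case False
  then have "0 < s * P"
    using assms by simp
  then have "(s * x * P)\<^sup>2 / ((s * x * P)\<^sup>2 + s * P) \<le> (s * x * P)\<^sup>2 / (s * P)"
    by (intro divide_left_mono) (auto intro!: mult_pos_pos add_nonneg_pos)
  also have "\<dots> = s * x\<^sup>2 * P"
    using \<open>0 < s * P\<close> by (simp add: power2_eq_square field_simps)
  finally show ?thesis .
qed simp

context restricted_ridge
begin

text \<open>Trading a zero-correlation active index for an inactive one with nonzero correlation
  strictly decreases the objective.\<close>

lemma corr_ne_0_if_optimal:
  assumes opt: "sdp_optimal X y \<rho> k bs (outer bs bs) (indicator_vec S)" and card: "card S = k"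
    and j: "j \<notin> S" "corr j \<noteq> 0" and i: "i \<in> S"
  shows "corr i \<noteq> 0"
proof
  assume "corr i = 0"
  then have "bs$i = 0"
    using corr_eq[OF i] rho_pos by simp
  define G where "G = ridge_gram X \<rho> $ j $ j"
  have "G > 0"
    using ridge_gram_diag_ge[of \<rho> X j] rho_pos by (simp add: G_def)
  define t where "t = corr j / G"
  define b where "b = bs + t *\<^sub>R axis j 1"
  have "i \<noteq> j" "0 < card S"
    using i j by (auto simp: card_gt_0_iff)
  have "sdp_feasible k b (outer b b) (indicator_vec (insert j (S - {i})))"
    unfolding sdp_feasible_def symmetric_mat_def sum_indicator_vec transpose_outer
    using psd_block_mat_outer_add[OF psd_zero, of b] \<open>bs$i = 0\<close> \<open>i \<noteq> j\<close> \<open>0 < card S\<close> i j(1) card bs_eq_0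
    by (auto simp: psd_mat22_iff indicator_vec_def outer_def b_def axis_def power2_eq_square)
  then have "ridge_obj X y \<rho> bs \<le> 2 * sdp_obj X y \<rho> b (outer b b)"
    by (rule sdp_optimalD[OF opt])
  also have "\<dots> = ridge_obj X y \<rho> b"
    by (simp add: sdp_obj_eq_ridge_obj)
  also have "ridge_obj X y \<rho> b = ridge_obj X y \<rho> bs - 2 * t * corr j + t\<^sup>2 * G"
  proof -
    have "(\<Sum>l\<in>-S. corr l * (t *\<^sub>R axis j 1) $ l) = t * corr j"
      using j(1) by (simp add: axis_def if_distrib[of "\<lambda>x. _ * x"] sum.delta' cong: if_cong)
    then show ?thesis
      unfolding b_def ridge_obj_bs_add
      by (simp add: matrix_vector_mult_scaleR quadratic_form_axis G_def power2_eq_square)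
  qed
  also have "\<dots> = ridge_obj X y \<rho> bs - (corr j)\<^sup>2 / G"
    using \<open>G > 0\<close> by (simp add: t_def power2_eq_square field_simps)
  finally show False
    using j(2) \<open>G > 0\<close> by (smt (verit) divide_pos_pos zero_less_power2)
qed

definition inactive_dir :: "real^'p^'p \<Rightarrow> real^'p" where
  "inactive_dir \<Psi> = (\<chi> j. if j \<in> S then 0 else corr j * \<Psi>$j$j)"

lemma sum_corr_inactive_dir: "(\<Sum>i\<in>-S. corr i * inactive_dir \<Psi> $ i) = (\<Sum>i\<in>-S. \<Psi>$i$i * (corr i)\<^sup>2)"
  by (rule sum.cong) (simp_all add: inactive_dir_def power2_eq_square)

lemma sdp_obj_perturbation:
  "2 * sdp_obj X y \<rho> (bs + r *\<^sub>R inactive_dir \<Psi>)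
      (outer (bs + r *\<^sub>R inactive_dir \<Psi>) (bs + r *\<^sub>R inactive_dir \<Psi>) + s *\<^sub>R \<Psi>)
    = ridge_obj X y \<rho> bs - 2 * r * (\<Sum>i\<in>-S. \<Psi>$i$i * (corr i)\<^sup>2)
      + r\<^sup>2 * (inactive_dir \<Psi> \<bullet> (ridge_gram X \<rho> *v inactive_dir \<Psi>)) + s * \<rho> * (scaled_gram X \<rho> \<bullet> \<Psi>)"
proof -
  have "(\<Sum>i\<in>-S. corr i * (r *\<^sub>R inactive_dir \<Psi>)$i) = r * (\<Sum>i\<in>-S. \<Psi>$i$i * (corr i)\<^sup>2)"
    by (simp add: sum_distrib_left mult.left_commute flip: sum_corr_inactive_dir)
  then show ?thesis
    using rho_pos unfolding sdp_obj_eq_ridge_obj ridge_obj_bs_add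
    by (simp add: ridge_gram_eq_scaleR matrix_vector_mult_scaleR power2_eq_square)
qed

lemma sum_ratio_perturbation_le:
  assumes \<Psi>: "psd \<Psi>" and s: "0 < s" and hS: "\<forall>i\<in>S. corr i \<noteq> 0"
    and b: "b = bs + (s * t) *\<^sub>R inactive_dir \<Psi>"
  shows "(\<Sum>i\<in>UNIV. (b$i)\<^sup>2 / (outer b b + s *\<^sub>R \<Psi>)$i$i)
    \<le> real (card S) - s * (\<Sum>i\<in>S. \<Psi>$i$i / ((bs$i)\<^sup>2 + s * \<Psi>$i$i)) + s * t\<^sup>2 * (\<Sum>i\<in>-S. \<Psi>$i$i * (corr i)\<^sup>2)"
proof -
  have diag: "(outer b b + s *\<^sub>R \<Psi>)$i$i = (b$i)\<^sup>2 + s * \<Psi>$i$i" for i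
    by (simp add: outer_def power2_eq_square)
  have "(\<Sum>i\<in>S. (b$i)\<^sup>2 / ((b$i)\<^sup>2 + s * \<Psi>$i$i)) = (\<Sum>i\<in>S. 1 - s * (\<Psi>$i$i / ((bs$i)\<^sup>2 + s * \<Psi>$i$i)))"
  proof (rule sum.cong[OF refl])
    fix i assume "i \<in> S"
    then have "0 < (bs$i)\<^sup>2 + s * \<Psi>$i$i"
      using hS corr_eq s psd_diag_nonneg[OF \<Psi>, of i] by (intro add_pos_nonneg) auto
    then show "(b$i)\<^sup>2 / ((b$i)\<^sup>2 + s * \<Psi>$i$i) = 1 - s * (\<Psi>$i$i / ((bs$i)\<^sup>2 + s * \<Psi>$i$i))"
      using \<open>i \<in> S\<close> by (simp add: b inactive_dir_def field_simps)
  qed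
  moreover have "(\<Sum>i\<in>-S. (b$i)\<^sup>2 / ((b$i)\<^sup>2 + s * \<Psi>$i$i)) \<le> (\<Sum>i\<in>-S. s * (t * corr i)\<^sup>2 * \<Psi>$i$i)"
  proof (rule sum_mono)
    fix i assume "i \<in> -S"
    then have "b$i = s * (t * corr i) * \<Psi>$i$i"
      by (simp add: b inactive_dir_def bs_eq_0)
    then show "(b$i)\<^sup>2 / ((b$i)\<^sup>2 + s * \<Psi>$i$i) \<le> s * (t * corr i)\<^sup>2 * \<Psi>$i$i"
      using sq_div_sq_add_le[OF s psd_diag_nonneg[OF \<Psi>]] by simp
  qed
  ultimately show ?thesis
    unfolding diag sum_UNIV_eq_sum_Compl[of _ S]
    by (simp add: sum_subtractf sum_distrib_left power_mult_distrib mult_ac)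
qed

text \<open>The perturbation \<open>b = b\<^sup>* + s t v\<close>, \<open>B = b b\<^sup>T + s \<Psi>\<close> with \<open>v = inactive_dir \<Psi>\<close> is feasible for small
  \<open>s > 0\<close> once \<open>t\<^sup>2 q < \<rho>\<^sup>2 p\<close>, and lowers the objective to first order in \<open>s\<close> once \<open>\<rho> a < 2 t q\<close>;
  optimality therefore forbids \<open>a\<^sup>2 < 4 p q\<close>.\<close>

lemma perturbation_bound:
  assumes opt: "sdp_optimal X y \<rho> k bs (outer bs bs) (indicator_vec S)" and card: "card S = k"
    and hS: "\<forall>i\<in>S. corr i \<noteq> 0" and \<Psi>: "psd \<Psi>"
  shows "4 * (\<Sum>i\<in>S. \<Psi>$i$i / (corr i)\<^sup>2) * (\<Sum>i\<in>-S. \<Psi>$i$i * (corr i)\<^sup>2) \<le> (scaled_gram X \<rho> \<bullet> \<Psi>)\<^sup>2"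
    (is "4 * ?p * ?q \<le> ?a\<^sup>2")
proof (rule ccontr)
  define F where "F s = (\<Sum>i\<in>S. \<Psi>$i$i / ((bs$i)\<^sup>2 + s * \<Psi>$i$i))" for s
  define K where "K = inactive_dir \<Psi> \<bullet> (ridge_gram X \<rho> *v inactive_dir \<Psi>)"
  assume "\<not> 4 * ?p * ?q \<le> ?a\<^sup>2"
  moreover have "0 \<le> ?a" "0 \<le> ?p" "0 \<le> ?q"
    using psd_inner_nonneg[OF psd_scaled_gram[OF rho_pos] \<Psi>] psd_diag_nonneg[OF \<Psi>]
    by (simp_all add: sum_nonneg)
  ultimately obtain t where t: "\<rho> * ?a < 2 * t * ?q" "t\<^sup>2 * ?q < \<rho>\<^sup>2 * ?p"
    using exists_step_between[OF rho_pos] by (meson not_le)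
  have "\<forall>i\<in>S. (bs$i)\<^sup>2 \<noteq> 0"
    using hS corr_eq by simp
  then have "(F \<longlongrightarrow> (\<Sum>i\<in>S. \<Psi>$i$i / (bs$i)\<^sup>2)) (at_right 0)"
    unfolding F_def by (rule tendsto_sum_ratio_at_right_0)
  moreover have "(\<Sum>i\<in>S. \<Psi>$i$i / (bs$i)\<^sup>2) = \<rho>\<^sup>2 * ?p"
    using rho_pos by (simp add: sum_distrib_left corr_eq power_mult_distrib)
  ultimately have "\<forall>\<^sub>F s in at_right 0. t\<^sup>2 * ?q < F s"
    using t(2) by (simp add: order_tendstoD(1))
  moreover have "((\<lambda>s. \<rho> * ?a - 2 * t * ?q + s * (t\<^sup>2 * K)) \<longlongrightarrow> \<rho> * ?a - 2 * t * ?q + 0 * (t\<^sup>2 * K)) (at_right 0)"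
    by (intro tendsto_intros)
  then have "\<forall>\<^sub>F s in at_right 0. \<rho> * ?a - 2 * t * ?q + s * (t\<^sup>2 * K) < 0"
    using t(1) by (simp add: order_tendstoD(2))
  ultimately have "\<forall>\<^sub>F s in at_right 0. 0 < s \<and> t\<^sup>2 * ?q < F s \<and> \<rho> * ?a - 2 * t * ?q + s * (t\<^sup>2 * K) < 0"
    using eventually_at_right_less[of 0] by eventually_elim auto
  then obtain s where s: "0 < s" "t\<^sup>2 * ?q < F s" "\<rho> * ?a - 2 * t * ?q + s * (t\<^sup>2 * K) < 0"
    using eventually_happens by force
  define b where "b = bs + (s * t) *\<^sub>R inactive_dir \<Psi>"
  have "s * (t\<^sup>2 * ?q) < s * F s"
    using s(1,2) by simp
  then have "(\<Sum>i\<in>UNIV. (b$i)\<^sup>2 / (outer b b + s *\<^sub>R \<Psi>)$i$i) \<le> real k"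
    using sum_ratio_perturbation_le[OF \<Psi> s(1) hS b_def] card unfolding F_def by linarith
  then have "sdp_feasible k b (outer b b + s *\<^sub>R \<Psi>) (\<chi> i. (b$i)\<^sup>2 / (outer b b + s *\<^sub>R \<Psi>)$i$i)"
    using s(1) by (intro sdp_feasible_ratio[OF \<Psi> _ refl]) simp_all
  then have "ridge_obj X y \<rho> bs \<le> 2 * sdp_obj X y \<rho> b (outer b b + s *\<^sub>R \<Psi>)"
    by (rule sdp_optimalD[OF opt])
  also have "\<dots> = ridge_obj X y \<rho> bs + s * (\<rho> * ?a - 2 * t * ?q + s * (t\<^sup>2 * K))"
    unfolding b_def sdp_obj_perturbation K_def by (simp add: power2_eq_square algebra_simps)
  finally show False
    using mult_pos_neg[OF s(1,3)] by simp
qed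

lemma exists_multiplier_dominated:
  assumes hS: "\<forall>i\<in>S. corr i \<noteq> 0" and \<Psi>: "psd \<Psi>"
    and bound: "4 * (\<Sum>i\<in>S. \<Psi>$i$i / (corr i)\<^sup>2) * (\<Sum>i\<in>-S. \<Psi>$i$i * (corr i)\<^sup>2) \<le> (scaled_gram X \<rho> \<bullet> \<Psi>)\<^sup>2"
      (is "4 * ?p * ?q \<le> ?a\<^sup>2")
  shows "\<exists>d\<in>multiplier_set S corr. diag_mat d \<bullet> \<Psi> \<le> scaled_gram X \<rho> \<bullet> \<Psi>"
proof -
  define d where "d lam = (\<chi> i. if i \<in> S then lam / (corr i)\<^sup>2 else (corr i)\<^sup>2 / lam)" for lam
  have d_mem: "d lam \<in> multiplier_set S corr" if "0 < lam" for lam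
    unfolding multiplier_set_def using that hS by (intro CollectI conjI exI[of _ lam]) (auto simp: d_def)
  have d_inner: "diag_mat (d lam) \<bullet> \<Psi> = lam * ?p + ?q / lam" for lam
    unfolding inner_diag_mat sum_UNIV_eq_sum_Compl[of _ S]
    by (simp add: d_def sum_distrib_left sum_divide_distrib mult.commute)
  have "\<exists>lam>0. lam * ?p + ?q / lam \<le> ?a"
  proof (cases "?a = 0")
    case True
    have "(\<Sum>i\<in>UNIV. \<Psi>$i$i) \<le> 0"
      using trace_le_inner_scaled_gram[OF rho_pos \<Psi>, of X] True by simp
    moreover have "0 \<le> (\<Sum>i\<in>UNIV. \<Psi>$i$i)"
      using psd_diag_nonneg[OF \<Psi>] by (simp add: sum_nonneg)
    ultimately have "\<forall>i\<in>UNIV. \<Psi>$i$i = 0"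
      using psd_diag_nonneg[OF \<Psi>] by (subst sum_nonneg_eq_0_iff[symmetric]) auto
    with True show ?thesis
      by (intro exI[of _ 1]) simp
  next
    case False
    then show ?thesis
      using psd_inner_nonneg[OF psd_scaled_gram[OF rho_pos, of X] \<Psi>] psd_diag_nonneg[OF \<Psi>] bound
      by (intro exists_pos_le_AM_GM) (simp_all add: sum_nonneg)
  qed
  then obtain lam where "0 < lam" "lam * ?p + ?q / lam \<le> ?a"
    by blast
  then show ?thesis
    using d_mem d_inner by (intro bexI[of _ "d lam"]) simp_all
qed

lemma multiplier_exists_if_optimal:
  assumes opt: "sdp_optimal X y \<rho> k bs (outer bs bs) (indicator_vec S)" and card: "card S = k" and "0 < k"
  shows "\<exists>d\<in>multiplier_set S corr. psd (scaled_gram X \<rho> - diag_mat d)"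
proof (cases "\<forall>j. j \<notin> S \<longrightarrow> corr j = 0")
  case True
  then have "0 \<in> multiplier_set S corr"
    unfolding multiplier_set_def by auto
  then show ?thesis
    using psd_scaled_gram[OF rho_pos] by (intro bexI[of _ 0]) (simp_all add: diag_mat_0)
next
  case False
  then obtain j where j: "j \<notin> S" "corr j \<noteq> 0" by blast
  obtain i0 where "i0 \<in> S"
    using card \<open>0 < k\<close> by (metis card.empty ex_in_conv less_irrefl)
  have hS: "\<forall>i\<in>S. corr i \<noteq> 0"
    using corr_ne_0_if_optimal[OF opt card j] by blast
  show ?thesis
  proof (rule psd_minus_diag_mat_if_dominates)
    show "convex (multiplier_set S corr)" "closed (multiplier_set S corr)"
      "\<forall>d\<in>multiplier_set S corr. \<forall>i. 0 \<le> d$i"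
      using convex_multiplier_set closed_multiplier_set[OF \<open>i0 \<in> S\<close>] multiplier_set_nonneg by blast+
    show "transpose (scaled_gram X \<rho>) = scaled_gram X \<rho>"
      by (rule psd_symmetric[OF psd_scaled_gram[OF rho_pos]])
    show "\<exists>d\<in>multiplier_set S corr. diag_mat d \<bullet> \<Psi> \<le> scaled_gram X \<rho> \<bullet> \<Psi>" if "psd \<Psi>" for \<Psi>
      using exists_multiplier_dominated[OF hS that perturbation_bound[OF opt card hS that]] .
  qed
qed

end

theorem theorem2:
  fixes X :: "real^'p^'n" and y :: "real^'n" and \<rho> :: real and k :: nat
    and S :: "'p set" and bstar :: "real^'p"
  assumes "\<rho> > 0" and "k > 0" and "card S = k"
    and "is_restricted_ridge_min X y \<rho> S bstar"
  shows "sdp_optimal X y \<rho> k bstar (outer bstar bstar) (indicator_vec S) \<longleftrightarrow>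
    (\<exists>d :: real^'p. \<exists>lam :: real. (\<forall>i. d $ i \<ge> 0) \<and> lam \<ge> 0 \<and>
       psd (inverse \<rho> *\<^sub>R (transpose X ** X) + mat 1 - diag_mat d) \<and>
       (\<forall>i\<in>S. lam = d $ i * (column i X \<bullet> (Mmat X \<rho> S *v y))\<^sup>2) \<and>
       (\<forall>i. i \<notin> S \<longrightarrow> lam * d $ i \<ge> (column i X \<bullet> (Mmat X \<rho> S *v y))\<^sup>2))"
proof -
  interpret restricted_ridge X y \<rho> S bstar
    using assms(1,4) by unfold_locales
  have dual: "(\<exists>d lam. (\<forall>i. d $ i \<ge> 0) \<and> lam \<ge> 0 \<and>
       psd (inverse \<rho> *\<^sub>R (transpose X ** X) + mat 1 - diag_mat d) \<and>
       (\<forall>i\<in>S. lam = d $ i * (column i X \<bullet> (Mmat X \<rho> S *v y))\<^sup>2) \<and>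
       (\<forall>i. i \<notin> S \<longrightarrow> lam * d $ i \<ge> (column i X \<bullet> (Mmat X \<rho> S *v y))\<^sup>2))
    \<longleftrightarrow> (\<exists>d\<in>multiplier_set S corr. psd (scaled_gram X \<rho> - diag_mat d))"
    unfolding column_inner_Mmat_y scaled_gram_def multiplier_set_def by blast
  show ?thesis
    unfolding dual
  proof
    assume "sdp_optimal X y \<rho> k bstar (outer bstar bstar) (indicator_vec S)"
    then show "\<exists>d\<in>multiplier_set S corr. psd (scaled_gram X \<rho> - diag_mat d)"
      using multiplier_exists_if_optimal assms(2,3) by blast
  next
    assume "\<exists>d\<in>multiplier_set S corr. psd (scaled_gram X \<rho> - diag_mat d)"
    then show "sdp_optimal X y \<rho> k bstar (outer bstar bstar) (indicator_vec S)"
      unfolding sdp_optimal_def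
      using sdp_feasible_candidate[OF assms(3)] sdp_obj_candidate_le[OF assms(3)] by blast
  qed
qed

end
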